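(* Let $G$ be an additive subgroup of $\mathbb{C}$ with $\mathrm{rank}\,G\ge2$, and let $V$ be a nontrivial irreducible Harish-Chandra module over $\mathrm{Vir}[G]$. Let $\lambda\in\mathrm{supp}V\setminus\{0\}$ and let $G_1,G_2$ be subgroups of $G$. If $V_{\lambda+G_1}$ is a uniformly bounded $\mathrm{Vir}[G_1]$-module and $V_{\lambda+G_2}$ is a uniformly bounded $\mathrm{Vir}[G_2]$-module, then $V_{\lambda+G_1+G_2}$ is a uniformly bounded $\mathrm{Vir}[G_1+G_2]$-module.
   Context: For a nonzero additive subgroup $G$ of $\mathbb{C}$, $\mathrm{Vir}[G]$ is the complex Lie algebra with basis $\{C,d_x:x\in G\}$ and brackets $[d_x,d_y]=(y-x)d_{x+y}+\delta_{x,-y}\frac{x^3-x}{12}C$, $[C,d_x]=0$; for a subgroup $H$, $\mathrm{Vir}[H]$ is spanned by $C$ and $d_x$, $x\in H$. The rank of a subgroup $A$ of $\mathbb{C}$ is the maximal $r$ such that there exist nonzero $g_1,\dots,g_r\in A$ with $\mathbb{Z}g_1+\dots+\mathbb{Z}g_r$ a direct sum. For a module $V$ on which $C$ acts as a scalar, $V_\lambda=\{v:d_0v=\lambda v\}$; weight module: sum of weight spaces; Harish-Chandra: weight module with finite-dimensional weight spaces; $\mathrm{supp}V=\{\lambda:V_\lambda\ne0\}$; trivial: the algebra acts by zero; uniformly bounded: weight-space dimensions bounded by a fixed $N$. For $S\subseteq\mathbb{C}$, $V_S=\bigoplus_{x\in S}V_x$; $V_{\lambda+H}$ is a $\mathrm{Vir}[H]$-module.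 *)

theory Defs
  imports Complex_Main "HOL-Library.Extended_Nat"
begin

definition add_subgroup :: "complex set \<Rightarrow> bool" where
  "add_subgroup A \<longleftrightarrow> 0 \<in> A \<and> (\<forall>x\<in>A. \<forall>y\<in>A. x + y \<in> A) \<and> (\<forall>x\<in>A. - x \<in> A)"

text \<open>Nonzero g_0,...,g_(r-1) in A whose cyclic subgroups form a direct sum.\<close>
definition rank_witness :: "complex set \<Rightarrow> nat \<Rightarrow> bool" where
  "rank_witness A r \<longleftrightarrow> (\<exists>g :: nat \<Rightarrow> complex.
      (\<forall>i<r. g i \<in> A \<and> g i \<noteq> 0) \<and>
      (\<forall>m :: nat \<Rightarrow> int. (\<Sum>i<r. of_int (m i) * g i) = 0 \<longrightarrow> (\<forall>i<r. of_int (m i) * g i = 0)))"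

definition group_rank :: "complex set \<Rightarrow> enat" where
  "group_rank A = Sup {enat r | r. rank_witness A r}"

definition set_plus_c :: "complex set \<Rightarrow> complex set \<Rightarrow> complex set" where
  "set_plus_c A B = {a + b | a b. a \<in> A \<and> b \<in> B}"

text \<open>A module over Vir[G] on the complex vector space given by scalar multiplication s
  on the type 'v, on which C acts as the scalar c, and d x is the action of d_x.\<close>
definition vir_module ::
  "complex set \<Rightarrow> (complex \<Rightarrow> 'v::ab_group_add \<Rightarrow> 'v) \<Rightarrow> complex \<Rightarrow> (complex \<Rightarrow> 'v \<Rightarrow> 'v) \<Rightarrow> bool" where
  "vir_module G s c d \<longleftrightarrow> vector_space s \<and>
     (\<forall>x\<in>G. \<forall>u v. d x (u + v) = d x u + d x v) \<and>
     (\<forall>x\<in>G. \<forall>a v. d x (s a v) = s a (d x v)) \<and>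
     (\<forall>x\<in>G. \<forall>y\<in>G. \<forall>v. d x (d y v) - d y (d x v) =
         s (y - x) (d (x + y) v) + s (if x = - y then (x ^ 3 - x) / 12 * c else 0) v)"

definition weight_space :: "(complex \<Rightarrow> 'v \<Rightarrow> 'v) \<Rightarrow> (complex \<Rightarrow> 'v \<Rightarrow> 'v) \<Rightarrow> complex \<Rightarrow> 'v set" where
  "weight_space s d \<mu> = {v. d 0 v = s \<mu> v}"

definition vir_trivial :: "complex set \<Rightarrow> complex \<Rightarrow> (complex \<Rightarrow> 'v::ab_group_add \<Rightarrow> 'v) \<Rightarrow> bool" where
  "vir_trivial G c d \<longleftrightarrow> c = 0 \<and> (\<forall>x\<in>G. \<forall>v. d x v = 0)"

definition vir_irreducible ::
  "complex set \<Rightarrow> (complex \<Rightarrow> 'v::ab_group_add \<Rightarrow> 'v) \<Rightarrow> (complex \<Rightarrow> 'v \<Rightarrow> 'v) \<Rightarrow> bool" where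
  "vir_irreducible G s d \<longleftrightarrow> (UNIV :: 'v set) \<noteq> {0} \<and>
     (\<forall>W. module.subspace s W \<and> (\<forall>x\<in>G. \<forall>w\<in>W. d x w \<in> W) \<longrightarrow> W = {0} \<or> W = UNIV)"

definition fin_dim :: "(complex \<Rightarrow> 'v::ab_group_add \<Rightarrow> 'v) \<Rightarrow> 'v set \<Rightarrow> bool" where
  "fin_dim s W \<longleftrightarrow> (\<exists>B. finite B \<and> W \<subseteq> module.span s B)"

definition harish_chandra ::
  "(complex \<Rightarrow> 'v::ab_group_add \<Rightarrow> 'v) \<Rightarrow> (complex \<Rightarrow> 'v \<Rightarrow> 'v) \<Rightarrow> bool" where
  "harish_chandra s d \<longleftrightarrow>
     (\<forall>v. v \<in> module.span s (\<Union>\<mu>. weight_space s d \<mu>)) \<and>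
     (\<forall>\<mu>. fin_dim s (weight_space s d \<mu>))"

definition supp :: "(complex \<Rightarrow> 'v::ab_group_add \<Rightarrow> 'v) \<Rightarrow> (complex \<Rightarrow> 'v \<Rightarrow> 'v) \<Rightarrow> complex set" where
  "supp s d = {\<mu>. weight_space s d \<mu> \<noteq> {0}}"

text \<open>V_{lambda+H}, as a Vir[H]-module, has weight spaces V_{lambda+h}, h in H.
  Uniformly bounded: their dimensions are bounded by a fixed N.\<close>
definition unif_bounded_coset ::
  "(complex \<Rightarrow> 'v::ab_group_add \<Rightarrow> 'v) \<Rightarrow> (complex \<Rightarrow> 'v \<Rightarrow> 'v) \<Rightarrow> complex \<Rightarrow> complex set \<Rightarrow> bool" where
  "unif_bounded_coset s d lam H \<longleftrightarrow>
     (\<exists>N::nat. \<forall>h\<in>H. fin_dim s (weight_space s d (lam + h)) \<and>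
                     vector_space.dim s (weight_space s d (lam + h)) \<le> N)"

end

theory Submission
  imports Defs
begin

(* Let mu = lam + g1 + g2 with g1 in G1, g2 in G2. The operators d x for the six shifts
   x = -g2, g1-g2, 2g1-g2, -g1, g2-g1, 2g2-g1 map V_mu into V_(lam + k g1) and V_(lam + k g2),
   k = 1, 2, 3, whose dimensions are bounded. If mu is not 0 they have no common kernel in V_mu:
   brackets of annihilating operators give d(y)v = d(-y)v = d(2y)v = d(-2y)v = 0 for y = g1 - g2,
   and then [d y, d(-y)] v = 0 and [d(2y), d(-2y)] v = 0 are two equations in mu and c with the
   only solution mu = 0. Rank-nullity bounds dim V_mu by the sum of the six target dimensions.
   The degenerate cases g1 = 0, g2 = 0, g1 = g2 and mu = 0 are immediate, so irreducibility,
   nontriviality, the rank condition and lam <> 0 are never used. *)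

context vector_space begin

lemma dim_subset_finite_span:
  assumes "V \<subseteq> W" and "W \<subseteq> span B" and "finite B"
  shows "dim V \<le> dim W"
proof -
  obtain C where C: "C \<subseteq> V" "independent C" "card C = dim V"
    using basis_exists by metis
  obtain D where D: "D \<subseteq> W" "independent D" "W \<subseteq> span D" "card D = dim W"
    using basis_exists by blast
  have "finite D"
    using independent_span_bound[OF \<open>finite B\<close> D(2)] D(1) assms(2) by blast
  then have "card C \<le> card D"
    using independent_span_bound[OF _ C(2)] C(1) D(3) assms(1) by blast
  with C(3) D(4) show ?thesis by simp
qed

lemma dim_le_dim_kernel_add_dim_image:
  assumes W: "subspace W" "W \<subseteq> span B" "finite B" and f: "Vector_Spaces.linear scale scale f"
  shows "dim W \<le> dim {w\<in>W. f w = 0} + dim (f ` W)"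
proof -
  interpret f: Vector_Spaces.linear scale scale f by (rule f)
  let ?K = "{w\<in>W. f w = 0}"
  obtain A where A: "A \<subseteq> f ` W" "independent A" "f ` W \<subseteq> span A" "card A = dim (f ` W)"
    using basis_exists by blast
  have "f ` W \<subseteq> span (f ` B)"
    using W(2) by (auto simp: f.span_image)
  then have "finite A"
    using independent_span_bound[OF finite_imageI[OF W(3)] A(2)] A(1) by blast
  have "\<forall>a\<in>A. \<exists>w\<in>W. f w = a"
    using A(1) by blast
  then obtain p where p: "\<And>a. a \<in> A \<Longrightarrow> p a \<in> W \<and> f (p a) = a"
    by metis
  obtain K where K: "K \<subseteq> ?K" "independent K" "?K \<subseteq> span K" "card K = dim ?K"
    using basis_exists by blast
  have "finite K"
    using independent_span_bound[OF W(3) K(2)] K(1) W(2) by blast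
  have "W \<subseteq> span (K \<union> p ` A)"
  proof
    fix w assume "w \<in> W"
    then obtain r where r: "f w = (\<Sum>a\<in>A. r a *s a)"
      using A(3) span_finite[OF \<open>finite A\<close>] by blast
    define t where "t = (\<Sum>a\<in>A. r a *s p a)"
    have "t \<in> W"
      unfolding t_def using p W(1) by (auto intro!: subspace_sum subspace_scale)
    moreover have "f t = f w"
      unfolding t_def r by (simp add: f.sum f.scale p)
    ultimately have "w - t \<in> ?K"
      using \<open>w \<in> W\<close> W(1) by (auto simp: subspace_diff f.diff)
    then have "w - t \<in> span (K \<union> p ` A)"
      using K(3) span_mono[of K "K \<union> p ` A"] by blast
    moreover have "t \<in> span (K \<union> p ` A)"
      unfolding t_def by (intro span_sum span_scale span_base) auto
    ultimately have "(w - t) + t \<in> span (K \<union> p ` A)"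
      by (rule span_add)
    then show "w \<in> span (K \<union> p ` A)" by simp
  qed
  then have "dim W \<le> card (K \<union> p ` A)"
    using \<open>finite K\<close> \<open>finite A\<close> by (intro dim_le_card) auto
  also have "\<dots> \<le> card K + card A"
    using card_Un_le[of K "p ` A"] card_image_le[OF \<open>finite A\<close>, of p] by linarith
  finally show ?thesis using K(4) A(4) by simp
qed

lemma dim_le_dim_common_kernel_add_dims:
  assumes "subspace W" and "W \<subseteq> span B" and "finite B"
    and "\<forall>f\<in>set fs. Vector_Spaces.linear scale scale f"
  shows "dim W \<le> dim {w\<in>W. \<forall>f\<in>set fs. f w = 0} + (\<Sum>f\<leftarrow>fs. dim (f ` W))"
  using assms
proof (induction fs arbitrary: W)
  case Nil
  then show ?case by simp
next
  case (Cons f fs)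
  let ?W' = "{w\<in>W. f w = 0}"
  have f: "Vector_Spaces.linear scale scale f" and fs: "\<forall>g\<in>set fs. Vector_Spaces.linear scale scale g"
    using Cons.prems(4) by auto
  interpret f: Vector_Spaces.linear scale scale f by (rule f)
  have "subspace ?W'"
    using subspace_inter[OF Cons.prems(1) f.subspace_kernel]
    by (simp add: Collect_conj_eq)
  moreover have "?W' \<subseteq> span B"
    using Cons.prems(2) by blast
  ultimately have IH: "dim ?W' \<le> dim {w\<in>?W'. \<forall>g\<in>set fs. g w = 0} + (\<Sum>g\<leftarrow>fs. dim (g ` ?W'))"
    using Cons.IH Cons.prems(3) fs by blast
  have "dim (g ` ?W') \<le> dim (g ` W)" if "g \<in> set fs" for g
  proof (rule dim_subset_finite_span)
    show "g ` ?W' \<subseteq> g ` W" by blast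
    interpret g: Vector_Spaces.linear scale scale g using fs that by blast
    show "g ` W \<subseteq> span (g ` B)"
      using Cons.prems(2) by (auto simp: g.span_image)
  qed (use Cons.prems(3) in simp)
  then have "(\<Sum>g\<leftarrow>fs. dim (g ` ?W')) \<le> (\<Sum>g\<leftarrow>fs. dim (g ` W))"
    by (rule sum_list_mono)
  moreover have "{w\<in>?W'. \<forall>g\<in>set fs. g w = 0} = {w\<in>W. \<forall>g\<in>set (f # fs). g w = 0}"
    by auto
  ultimately show ?case
    using IH dim_le_dim_kernel_add_dim_image[OF Cons.prems(1-3) f] by simp
qed

end

lemma add_subgroup_closed:
  assumes "add_subgroup A"
  shows add_subgroup_zero: "0 \<in> A"
    and add_subgroup_add: "x \<in> A \<Longrightarrow> y \<in> A \<Longrightarrow> x + y \<in> A"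
    and add_subgroup_uminus: "x \<in> A \<Longrightarrow> - x \<in> A"
    and add_subgroup_diff: "x \<in> A \<Longrightarrow> y \<in> A \<Longrightarrow> x - y \<in> A"
  using assms unfolding add_subgroup_def by (auto, metis diff_conv_add_uminus)

lemma add_subgroup_of_nat_mult:
  assumes "add_subgroup A" and "x \<in> A"
  shows "of_nat n * x \<in> A"
proof (induction n)
  case (Suc n)
  have "of_nat (Suc n) * x = of_nat n * x + x"
    by (simp add: distrib_right)
  then show ?case
    using add_subgroup_add[OF assms(1) Suc assms(2)] by simp
qed (simp add: add_subgroup_zero[OF assms(1)])

lemma cocycle_identities_imp_zero:
  fixes y \<mu> c :: "'a::field_char_0"
  assumes "y \<noteq> 0"
    and "(y ^ 3 - y) / 12 * c = 2 * y * \<mu>"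
    and "((2 * y) ^ 3 - 2 * y) / 12 * c = 2 * (2 * y) * \<mu>"
  shows "\<mu> = 0"
proof -
  have e1: "(y ^ 3 - y) * c = 24 * y * \<mu>"
    using assms(2) by (simp add: field_simps)
  have e2: "(8 * y ^ 3 - 2 * y) * c = 48 * y * \<mu>"
    using assms(3) by (simp add: field_simps power_mult_distrib)
  have "6 * y ^ 3 * c = (8 * y ^ 3 - 2 * y) * c - 2 * ((y ^ 3 - y) * c)"
    by (simp add: algebra_simps)
  also have "\<dots> = 0"
    unfolding e1 e2 by simp
  finally have "c = 0"
    using assms(1) by simp
  then show ?thesis
    using assms(1,2) by simp
qed

lemma harish_chandra_fin_dim: "harish_chandra s d \<Longrightarrow> fin_dim s (weight_space s d \<mu>)"
  unfolding harish_chandra_def by blast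

definition coset_shifts :: "complex \<Rightarrow> complex \<Rightarrow> complex list" where
  "coset_shifts g1 g2 = [- g2, g1 - g2, 2 * g1 - g2, - g1, g2 - g1, 2 * g2 - g1]"

lemma sum_list_coset_shifts:
  "(\<Sum>x\<leftarrow>coset_shifts g1 g2. f (lam + (g1 + g2) + x))
     = f (lam + g1) + f (lam + 2 * g1) + f (lam + 3 * g1) + f (lam + g2) + f (lam + 2 * g2) + f (lam + 3 * g2)"
proof -
  have "lam + (g1 + g2) + - g2 = lam + g1" "lam + (g1 + g2) + (g1 - g2) = lam + 2 * g1"
    "lam + (g1 + g2) + (2 * g1 - g2) = lam + 3 * g1" "lam + (g1 + g2) + - g1 = lam + g2"
    "lam + (g1 + g2) + (g2 - g1) = lam + 2 * g2" "lam + (g1 + g2) + (2 * g2 - g1) = lam + 3 * g2"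
    by (simp_all add: algebra_simps)
  then show ?thesis
    by (simp only: coset_shifts_def list.map sum_list_simps add.assoc add_0_right)
qed

lemma coset_shifts_subset:
  assumes "add_subgroup G" and "g1 \<in> G" and "g2 \<in> G"
  shows "set (coset_shifts g1 g2) \<subseteq> G"
  using add_subgroup_of_nat_mult[OF assms(1), of _ 2] assms
  by (auto simp: coset_shifts_def add_subgroup_closed)

locale virasoro_module =
  fixes G :: "complex set" and s :: "complex \<Rightarrow> 'v::ab_group_add \<Rightarrow> 'v"
    and c :: complex and d :: "complex \<Rightarrow> 'v \<Rightarrow> 'v"
  assumes subgroup: "add_subgroup G" and module: "vir_module G s c d"
begin

sublocale vector_space s
  using module unfolding vir_module_def by blast

lemma action_linear: "x \<in> G \<Longrightarrow> Vector_Spaces.linear s s (d x)"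
  using module vector_space_axioms unfolding vir_module_def Vector_Spaces.linear_iff by blast

lemma action_zero: "x \<in> G \<Longrightarrow> d x 0 = 0"
  using action_linear module_hom.zero module_hom_iff_linear by blast

lemma bracket:
  "x \<in> G \<Longrightarrow> y \<in> G \<Longrightarrow> d x (d y v) - d y (d x v) =
     s (y - x) (d (x + y) v) + s (if x = - y then (x ^ 3 - x) / 12 * c else 0) v"
  using module unfolding vir_module_def by blast

lemma action_weight_space:
  assumes "x \<in> G" and "v \<in> weight_space s d \<mu>"
  shows "d x v \<in> weight_space s d (\<mu> + x)"
proof -
  have "d 0 (d x v) - d x (d 0 v) = s x (d x v)"
    using bracket[OF add_subgroup_zero[OF subgroup] assms(1), of v] by simp
  moreover have "d x (d 0 v) = s \<mu> (d x v)"
    using assms action_linear[OF assms(1)] module_hom.scale module_hom_iff_linear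
    unfolding weight_space_def by fastforce
  ultimately have "d 0 (d x v) = s (\<mu> + x) (d x v)"
    by (simp add: scale_left_distrib algebra_simps)
  then show ?thesis
    unfolding weight_space_def by simp
qed

lemma subspace_weight_space: "subspace (weight_space s d \<mu>)"
proof -
  interpret d0: Vector_Spaces.linear s s "d 0"
    using action_linear add_subgroup_zero[OF subgroup] by blast
  show ?thesis
    unfolding subspace_def weight_space_def
    by (auto simp: d0.add d0.scale scale_right_distrib mult.commute)
qed

lemma annihilated_add:
  assumes "x \<in> G" and "y \<in> G" and "x \<noteq> y" and "x \<noteq> - y"
    and "d x v = 0" and "d y v = 0"
  shows "d (x + y) v = 0"
proof -
  have "s (y - x) (d (x + y) v) = 0"
    using bracket[OF assms(1,2), of v] assms(4-6) action_zero[OF assms(1)] action_zero[OF assms(2)]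
    by simp
  then show ?thesis
    using assms(3) by simp
qed

lemma cocycle_identity:
  assumes "x \<in> G" and "v \<in> weight_space s d \<mu>" and "v \<noteq> 0"
    and "d x v = 0" and "d (- x) v = 0"
  shows "(x ^ 3 - x) / 12 * c = 2 * x * \<mu>"
proof -
  have "- x \<in> G"
    using add_subgroup_uminus[OF subgroup assms(1)] .
  then have "s (- x - x) (d 0 v) + s ((x ^ 3 - x) / 12 * c) v = 0"
    using bracket[OF assms(1), of "- x" v] assms(4,5) action_zero[OF assms(1)] action_zero
    by simp
  then have "s ((x ^ 3 - x) / 12 * c - 2 * x * \<mu>) v = 0"
    using assms(2) unfolding weight_space_def
    by (simp add: scale_left_diff_distrib scale_left_distrib algebra_simps)
  then show ?thesis
    using assms(3) by simp
qed

lemma weight_vector_eq_0_if_annihilated: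
  assumes "g1 \<in> G" and "g2 \<in> G" and "g1 \<noteq> 0" and "g2 \<noteq> 0" and "g1 \<noteq> g2" and "\<mu> \<noteq> 0"
    and v: "v \<in> weight_space s d \<mu>"
    and ann: "\<forall>x\<in>set (coset_shifts g1 g2). d x v = 0"
  shows "v = 0"
proof (rule ccontr)
  assume "v \<noteq> 0"
  define y where "y = g1 - g2"
  have shifts: "set (coset_shifts g1 g2) \<subseteq> G"
    using coset_shifts_subset[OF subgroup assms(1,2)] .
  have "y \<in> G"
    using shifts by (simp add: y_def coset_shifts_def)
  then have "2 * y \<in> G"
    using add_subgroup_of_nat_mult[OF subgroup, of y 2] by simp
  have ann_list: "d (- g2) v = 0" "d (2 * g1 - g2) v = 0" "d (- g1) v = 0" "d (2 * g2 - g1) v = 0"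
      "d y v = 0" "d (- y) v = 0"
    using ann by (simp_all add: coset_shifts_def y_def)
  have "d (- g2 + (2 * g1 - g2)) v = 0"
    using shifts assms(3,5) ann_list(1,2)
    by (intro annihilated_add) (auto simp: coset_shifts_def)
  then have "d (2 * y) v = 0"
    by (simp add: y_def algebra_simps)
  moreover have "d (- g1 + (2 * g2 - g1)) v = 0"
    using shifts assms(4,5) ann_list(3,4)
    by (intro annihilated_add) (auto simp: coset_shifts_def)
  then have "d (- (2 * y)) v = 0"
    by (simp add: y_def algebra_simps)
  ultimately have "((2 * y) ^ 3 - 2 * y) / 12 * c = 2 * (2 * y) * \<mu>"
    using cocycle_identity[OF \<open>2 * y \<in> G\<close> v \<open>v \<noteq> 0\<close>] by blast
  moreover have "(y ^ 3 - y) / 12 * c = 2 * y * \<mu>"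
    using cocycle_identity[OF \<open>y \<in> G\<close> v \<open>v \<noteq> 0\<close> ann_list(5,6)] .
  moreover have "y \<noteq> 0"
    using assms(5) by (simp add: y_def)
  ultimately have "\<mu> = 0"
    using cocycle_identities_imp_zero by blast
  with assms(6) show False ..
qed

lemma dim_image_weight_space_le:
  assumes "harish_chandra s d" and "x \<in> G"
  shows "dim (d x ` weight_space s d \<mu>) \<le> dim (weight_space s d (\<mu> + x))"
proof -
  obtain B where "finite B" "weight_space s d (\<mu> + x) \<subseteq> span B"
    using harish_chandra_fin_dim[OF assms(1)] unfolding fin_dim_def by blast
  moreover have "d x ` weight_space s d \<mu> \<subseteq> weight_space s d (\<mu> + x)"
    using action_weight_space[OF assms(2)] by blast
  ultimately show ?thesis
    using dim_subset_finite_span by blast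
qed

lemma dim_weight_space_le_sum_shifted:
  assumes "harish_chandra s d"
    and "g1 \<in> G" and "g2 \<in> G" and "g1 \<noteq> 0" and "g2 \<noteq> 0" and "g1 \<noteq> g2" and "\<mu> \<noteq> 0"
  shows "dim (weight_space s d \<mu>) \<le> (\<Sum>x\<leftarrow>coset_shifts g1 g2. dim (weight_space s d (\<mu> + x)))"
proof -
  let ?W = "weight_space s d \<mu>" and ?xs = "coset_shifts g1 g2"
  let ?K = "{w\<in>?W. \<forall>f\<in>set (map d ?xs). f w = 0}"
  have shifts: "set ?xs \<subseteq> G"
    using coset_shifts_subset[OF subgroup assms(2,3)] .
  obtain B where "finite B" "?W \<subseteq> span B"
    using harish_chandra_fin_dim[OF assms(1)] unfolding fin_dim_def by blast
  moreover have "\<forall>f\<in>set (map d ?xs). Vector_Spaces.linear s s f"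
    using shifts action_linear by auto
  ultimately have "dim ?W \<le> dim ?K + (\<Sum>f\<leftarrow>map d ?xs. dim (f ` ?W))"
    using dim_le_dim_common_kernel_add_dims[OF subspace_weight_space] by blast
  also have "dim ?K = 0"
    using weight_vector_eq_0_if_annihilated[OF assms(2-7)] dim_le_card[of ?K "{}"] by auto
  also have "(\<Sum>f\<leftarrow>map d ?xs. dim (f ` ?W)) \<le> (\<Sum>x\<leftarrow>?xs. dim (weight_space s d (\<mu> + x)))"
    unfolding map_map comp_def
    using dim_image_weight_space_le[OF assms(1)] shifts by (intro sum_list_mono) auto
  finally show ?thesis by simp
qed

lemma dim_weight_space_coset_sum_le:
  assumes "harish_chandra s d"
    and "add_subgroup G1" and "G1 \<subseteq> G" and "add_subgroup G2" and "G2 \<subseteq> G"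
    and N1: "\<forall>h\<in>G1. dim (weight_space s d (lam + h)) \<le> N1"
    and N2: "\<forall>h\<in>G2. dim (weight_space s d (lam + h)) \<le> N2"
    and "g1 \<in> G1" and "g2 \<in> G2"
  shows "dim (weight_space s d (lam + (g1 + g2))) \<le> 3 * N1 + 3 * N2 + dim (weight_space s d 0)"
proof -
  have multiples: "2 * g1 \<in> G1" "3 * g1 \<in> G1" "2 * g2 \<in> G2" "3 * g2 \<in> G2"
    using add_subgroup_of_nat_mult[OF assms(2,8), of 2] add_subgroup_of_nat_mult[OF assms(2,8), of 3]
      add_subgroup_of_nat_mult[OF assms(4,9), of 2] add_subgroup_of_nat_mult[OF assms(4,9), of 3]
    by simp_all
  consider "g1 = 0" | "g2 = 0" | "g1 = g2" | "lam + (g1 + g2) = 0"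
    | "g1 \<noteq> 0" "g2 \<noteq> 0" "g1 \<noteq> g2" "lam + (g1 + g2) \<noteq> 0"
    by argo
  then show ?thesis
  proof cases
    case 1
    with N2 assms(9) have "dim (weight_space s d (lam + (g1 + g2))) \<le> N2"
      by simp
    then show ?thesis by linarith
  next
    case 2
    with N1 assms(8) have "dim (weight_space s d (lam + (g1 + g2))) \<le> N1"
      by simp
    then show ?thesis by linarith
  next
    case 3
    then have "dim (weight_space s d (lam + (g1 + g2))) \<le> N1"
      using N1 multiples(1) by (simp flip: mult_2)
    then show ?thesis by linarith
  next
    case 4
    then show ?thesis by simp
  next
    case 5
    have "g1 \<in> G" "g2 \<in> G"
      using assms(3,5,8,9) by auto
    then have "dim (weight_space s d (lam + (g1 + g2)))
        \<le> (\<Sum>x\<leftarrow>coset_shifts g1 g2. dim (weight_space s d (lam + (g1 + g2) + x)))"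
      using dim_weight_space_le_sum_shifted[OF assms(1)] 5 by blast
    also have "\<dots> = dim (weight_space s d (lam + g1)) + dim (weight_space s d (lam + 2 * g1))
        + dim (weight_space s d (lam + 3 * g1)) + dim (weight_space s d (lam + g2))
        + dim (weight_space s d (lam + 2 * g2)) + dim (weight_space s d (lam + 3 * g2))"
      by (rule sum_list_coset_shifts)
    also have "\<dots> \<le> N1 + N1 + N1 + N2 + N2 + N2"
      using N1 N2 assms(8,9) multiples by (intro add_mono) auto
    finally show ?thesis by simp
  qed
qed

end

theorem lemma3p5:
  fixes G G1 G2 :: "complex set"
    and s :: "complex \<Rightarrow> 'v::ab_group_add \<Rightarrow> 'v"
    and c :: complex
    and d :: "complex \<Rightarrow> 'v \<Rightarrow> 'v"
    and lam :: complex
  assumes "add_subgroup G" and "G \<noteq> {0}" and "group_rank G \<ge> 2"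
    and "vir_module G s c d"
    and "\<not> vir_trivial G c d"
    and "vir_irreducible G s d"
    and "harish_chandra s d"
    and "lam \<in> supp s d" and "lam \<noteq> 0"
    and "add_subgroup G1" and "G1 \<subseteq> G"
    and "add_subgroup G2" and "G2 \<subseteq> G"
    and "unif_bounded_coset s d lam G1"
    and "unif_bounded_coset s d lam G2"
  shows "unif_bounded_coset s d lam (set_plus_c G1 G2)"
proof -
  interpret virasoro_module G s c d
    using assms(1,4) by unfold_locales
  obtain N1 where N1: "\<forall>h\<in>G1. dim (weight_space s d (lam + h)) \<le> N1"
    using assms(14) unfolding unif_bounded_coset_def by blast
  obtain N2 where N2: "\<forall>h\<in>G2. dim (weight_space s d (lam + h)) \<le> N2"
    using assms(15) unfolding unif_bounded_coset_def by blast
  have "dim (weight_space s d (lam + z)) \<le> 3 * N1 + 3 * N2 + dim (weight_space s d 0)"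
    if "z \<in> set_plus_c G1 G2" for z
  proof -
    from that obtain g1 g2 where "g1 \<in> G1" "g2 \<in> G2" "z = g1 + g2"
      unfolding set_plus_c_def by blast
    then show ?thesis
      using dim_weight_space_coset_sum_le[OF assms(7,10-13) N1 N2] by blast
  qed
  then show ?thesis
    unfolding unif_bounded_coset_def using harish_chandra_fin_dim[OF assms(7)] by blast
qed

end
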